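(* Let $E$ be an acyclic directed graph and let $C\subset E(G(E))$ be an infinite chain (linearly ordered subset with respect to the natural partial order). Then there exists a subgraph $T\subset E$ isomorphic to the unary tree such that $C\subset E(G(T))$.
   Context: A directed graph $E=(E^0,E^1,r,s)$ has vertices $E^0$, edges $E^1$, source/range maps $s,r:E^1\to E^0$; paths are vertices and sequences of edges $e_1\ldots e_n$ with $r(e_i)=s(e_{i+1})$; acyclic means no path of non-zero length with equal source and range. The graph inverse semigroup $G(E)$ is the semigroup with zero $0$ generated by $E^0$, $E^1$, $E^{-1}=\{e^{-1}\mid e\in E^1\}$ subject to: for $a,b\in E^0$, $e,f\in E^1$: $ab=a$ if $a=b$, else $0$; $s(e)e=er(e)=e$; $e^{-1}s(e)=r(e)e^{-1}=e^{-1}$; $e^{-1}f=r(e)$ if $e=f$, else $0$. For a subgraph $T$, $G(T)$ is the subsemigroup of $G(E)$ generated by $T^0\cup T^1\cup T^{-1}$ and $0$. $E(G(E))$ is the set of idempotents, a semilattice under the natural partial order $e\le f$ iff $e=ef=fe$. The unary tree is the graph with vertex set $\omega$ and edges $(n,n+1)$, $n\in\omega$, with source $n$ and range $n+1$. *)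

theory Defs
  imports Main "HOL-Library.Sublist"
begin

text \<open>A path is represented as a pair (v, es): its source vertex v and its
list of edges es (empty list = the vertex v itself, a path of length 0).\<close>

type_synonym ('v,'e) path = "'v \<times> 'e list"

definition graph :: "'v set \<Rightarrow> 'e set \<Rightarrow> ('e \<Rightarrow> 'v) \<Rightarrow> ('e \<Rightarrow> 'v) \<Rightarrow> bool" where
  "graph V Ed src rng \<longleftrightarrow> (\<forall>e\<in>Ed. src e \<in> V \<and> rng e \<in> V)"

definition is_path :: "'v set \<Rightarrow> 'e set \<Rightarrow> ('e \<Rightarrow> 'v) \<Rightarrow> ('e \<Rightarrow> 'v) \<Rightarrow> ('v,'e) path \<Rightarrow> bool" where
  "is_path V Ed src rng p \<longleftrightarrow>
     fst p \<in> V \<and> set (snd p) \<subseteq> Ed \<and>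
     (snd p \<noteq> [] \<longrightarrow> src (hd (snd p)) = fst p) \<and>
     (\<forall>i. Suc i < length (snd p) \<longrightarrow> rng (snd p ! i) = src (snd p ! Suc i))"

definition path_rng :: "('e \<Rightarrow> 'v) \<Rightarrow> ('v,'e) path \<Rightarrow> 'v" where
  "path_rng rng p = (if snd p = [] then fst p else rng (last (snd p)))"

definition acyclic_graph :: "'v set \<Rightarrow> 'e set \<Rightarrow> ('e \<Rightarrow> 'v) \<Rightarrow> ('e \<Rightarrow> 'v) \<Rightarrow> bool" where
  "acyclic_graph V Ed src rng \<longleftrightarrow>
     (\<forall>p. is_path V Ed src rng p \<and> snd p \<noteq> [] \<longrightarrow> fst p \<noteq> path_rng rng p)"

text \<open>Elements of the graph inverse semigroup in their standard normal form:
zero, or p q^-1 with p, q paths with r(p) = r(q).\<close>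

datatype ('v,'e) gis = Zero | PQ "('v,'e) path" "('v,'e) path"

definition gis_carrier :: "'v set \<Rightarrow> 'e set \<Rightarrow> ('e \<Rightarrow> 'v) \<Rightarrow> ('e \<Rightarrow> 'v) \<Rightarrow> ('v,'e) gis set" where
  "gis_carrier V Ed src rng = insert Zero
     {PQ p q | p q. is_path V Ed src rng p \<and> is_path V Ed src rng q \<and> path_rng rng p = path_rng rng q}"

text \<open>Multiplication: (p q^-1)(r s^-1) = p r' s^-1 if r = q r', = p (s q')^-1 if q = r q', else 0.\<close>

fun gis_mult :: "('v,'e) gis \<Rightarrow> ('v,'e) gis \<Rightarrow> ('v,'e) gis" where
  "gis_mult Zero _ = Zero"
| "gis_mult _ Zero = Zero"
| "gis_mult (PQ p q) (PQ r s) =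
     (if fst q = fst r \<and> prefix (snd q) (snd r)
      then PQ (fst p, snd p @ drop (length (snd q)) (snd r)) s
      else if fst q = fst r \<and> prefix (snd r) (snd q)
      then PQ p (fst s, snd s @ drop (length (snd r)) (snd q))
      else Zero)"

definition gis_vertex :: "'v \<Rightarrow> ('v,'e) gis" where
  "gis_vertex v = PQ (v, []) (v, [])"

definition gis_edge :: "('e \<Rightarrow> 'v) \<Rightarrow> ('e \<Rightarrow> 'v) \<Rightarrow> 'e \<Rightarrow> ('v,'e) gis" where
  "gis_edge src rng e = PQ (src e, [e]) (rng e, [])"

definition gis_edge_inv :: "('e \<Rightarrow> 'v) \<Rightarrow> ('e \<Rightarrow> 'v) \<Rightarrow> 'e \<Rightarrow> ('v,'e) gis" where
  "gis_edge_inv src rng e = PQ (rng e, []) (src e, [e])"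

inductive_set gis_gen :: "'v set \<Rightarrow> 'e set \<Rightarrow> ('e \<Rightarrow> 'v) \<Rightarrow> ('e \<Rightarrow> 'v) \<Rightarrow> ('v,'e) gis set"
  for T0 T1 src rng where
  zero: "Zero \<in> gis_gen T0 T1 src rng"
| vert: "v \<in> T0 \<Longrightarrow> gis_vertex v \<in> gis_gen T0 T1 src rng"
| edge: "e \<in> T1 \<Longrightarrow> gis_edge src rng e \<in> gis_gen T0 T1 src rng"
| einv: "e \<in> T1 \<Longrightarrow> gis_edge_inv src rng e \<in> gis_gen T0 T1 src rng"
| mult: "x \<in> gis_gen T0 T1 src rng \<Longrightarrow> y \<in> gis_gen T0 T1 src rng \<Longrightarrow>
         gis_mult x y \<in> gis_gen T0 T1 src rng"

definition idempotents :: "('v,'e) gis set \<Rightarrow> ('v,'e) gis set" where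
  "idempotents S = {x \<in> S. gis_mult x x = x}"

definition gis_le :: "('v,'e) gis \<Rightarrow> ('v,'e) gis \<Rightarrow> bool" where
  "gis_le e f \<longleftrightarrow> e = gis_mult e f \<and> e = gis_mult f e"

definition is_chain :: "('v,'e) gis set \<Rightarrow> bool" where
  "is_chain C \<longleftrightarrow> (\<forall>x\<in>C. \<forall>y\<in>C. gis_le x y \<or> gis_le y x)"

definition unary_tree_subgraph ::
  "'v set \<Rightarrow> 'e set \<Rightarrow> ('e \<Rightarrow> 'v) \<Rightarrow> ('e \<Rightarrow> 'v) \<Rightarrow> 'v set \<Rightarrow> 'e set \<Rightarrow> bool" where
  "unary_tree_subgraph V Ed src rng T0 T1 \<longleftrightarrow>
     T0 \<subseteq> V \<and> T1 \<subseteq> Ed \<and>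
     (\<exists>vf :: nat \<Rightarrow> 'v. \<exists>ef :: nat \<Rightarrow> 'e.
        inj vf \<and> inj ef \<and> T0 = range vf \<and> T1 = range ef \<and>
        (\<forall>n. src (ef n) = vf n \<and> rng (ef n) = vf (Suc n)))"

end

theory Submission
  imports Defs
begin

text \<open>A nonzero idempotent of G(E) has the form p p^-1 for a path p, and p p^-1 \<le> q q^-1
exactly when q is an initial segment of p. An infinite chain of idempotents is therefore
an infinite family of paths from one vertex, any two of which are comparable under
the prefix order; their union is an infinite ray e_0 e_1 e_2 ... . Acyclicity makes the
vertices of the ray pairwise distinct, so the ray spans a copy T of the unary tree, and
every element p p^-1 of the chain, p being an initial segment of the ray, is a product of
generators of G(T).\<close>

lemma prefix_nth: "prefix xs ys \<Longrightarrow> i < length xs \<Longrightarrow> xs ! i = ys ! i"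
  by (auto simp: prefix_def nth_append)

lemma prefix_chain_lengths_unbounded:
  assumes "infinite L" and chain: "\<forall>xs\<in>L. \<forall>ys\<in>L. prefix xs ys \<or> prefix ys xs"
  shows "\<exists>xs\<in>L. n < length xs"
proof (rule ccontr)
  assume "\<not> ?thesis"
  then have "length ` L \<subseteq> {..n}" by force
  moreover have "inj_on length L"
    using chain by (intro inj_onI) (metis prefix_length_prefix prefix_order.antisym order_refl)
  ultimately show False
    using \<open>infinite L\<close> by (metis finite_atMost finite_imageD finite_subset)
qed

lemma prefix_chain_limit:
  assumes unbounded: "\<And>n. \<exists>xs\<in>L. n < length xs"
    and chain: "\<forall>xs\<in>L. \<forall>ys\<in>L. prefix xs ys \<or> prefix ys xs"
  obtains f where "\<And>xs. xs \<in> L \<Longrightarrow> xs = map f [0..<length xs]"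
proof
  define f where "f n = (SOME xs. xs \<in> L \<and> n < length xs) ! n" for n
  have nth_f: "xs ! n = f n" if "xs \<in> L" "n < length xs" for xs n
  proof -
    define ys where "ys = (SOME xs. xs \<in> L \<and> n < length xs)"
    have ys: "ys \<in> L \<and> n < length ys"
      unfolding ys_def using unbounded[of n] by (metis (mono_tags, lifting) someI_ex)
    then show ?thesis
      using chain that prefix_nth unfolding f_def ys_def[symmetric] by metis
  qed
  show "xs = map f [0..<length xs]" if "xs \<in> L" for xs
    by (rule nth_equalityI) (simp_all add: nth_f[OF that])
qed

lemma is_path_take:
  "is_path V E src rng (v, es) \<Longrightarrow> is_path V E src rng (v, take n es)"
  unfolding is_path_def by (auto dest: in_set_takeD)

lemma is_path_snoc:
  "is_path V E src rng (v, es @ [e]) \<Longrightarrow>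
     is_path V E src rng (v, es) \<and> e \<in> E \<and> src e = path_rng rng (v, es)"
  unfolding is_path_def path_rng_def
  by (auto simp: nth_append last_conv_nth split: if_splits)

lemma is_path_map_upt:
  assumes "src (ef i) \<in> V" and "ef ` {i..<j} \<subseteq> E"
    and "\<And>n. rng (ef n) = src (ef (Suc n))"
  shows "is_path V E src rng (src (ef i), map ef [i..<j])"
  using assms unfolding is_path_def by (auto simp: hd_map)

lemma path_rng_map_upt:
  assumes "i \<le> j" and "\<And>n. rng (ef n) = src (ef (Suc n))"
  shows "path_rng rng (src (ef i), map ef [i..<j]) = src (ef j)"
  using assms by (auto simp: path_rng_def last_map)

definition is_ray :: "'e set \<Rightarrow> ('e \<Rightarrow> 'v) \<Rightarrow> ('e \<Rightarrow> 'v) \<Rightarrow> (nat \<Rightarrow> 'e) \<Rightarrow> bool" where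
  "is_ray E src rng ef \<longleftrightarrow> (\<forall>n. ef n \<in> E \<and> rng (ef n) = src (ef (Suc n)))"

lemma is_ray_if_paths_unbounded:
  assumes "\<And>n. \<exists>m>n. is_path V E src rng (v, map ef [0..<m])"
  shows "is_ray E src rng ef" and "src (ef 0) = v"
proof -
  have path: "is_path V E src rng (v, map ef [0..<n])" for n
  proof -
    obtain m where "n < m" "is_path V E src rng (v, map ef [0..<m])"
      using assms by blast
    then show ?thesis
      using is_path_take[of V E src rng v "map ef [0..<m]" n] by (simp add: take_map)
  qed
  show "is_ray E src rng ef"
    unfolding is_ray_def
  proof
    fix n
    from path[of "Suc (Suc n)"] show "ef n \<in> E \<and> rng (ef n) = src (ef (Suc n))"
      unfolding is_path_def by (auto simp: nth_append)
  qed
  from path[of 1] show "src (ef 0) = v"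
    unfolding is_path_def by simp
qed

lemma acyclic_ray_vertices_distinct:
  assumes "graph V E src rng" and "acyclic_graph V E src rng"
    and ray: "is_ray E src rng ef" and "i < j"
  shows "src (ef i) \<noteq> src (ef j)"
proof -
  have "src (ef i) \<in> V" and "ef ` {i..<j} \<subseteq> E"
    using assms(1) ray unfolding graph_def is_ray_def by auto
  then have "is_path V E src rng (src (ef i), map ef [i..<j])"
    using ray is_path_map_upt unfolding is_ray_def by metis
  then have "src (ef i) \<noteq> path_rng rng (src (ef i), map ef [i..<j])"
    using assms(2) \<open>i < j\<close> unfolding acyclic_graph_def by auto
  then show ?thesis
    using path_rng_map_upt[of i j rng ef src] ray \<open>i < j\<close> unfolding is_ray_def by simp
qed

lemma unary_tree_subgraph_ray:
  assumes "graph V E src rng" and "acyclic_graph V E src rng" and ray: "is_ray E src rng ef"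
  shows "unary_tree_subgraph V E src rng (range (\<lambda>n. src (ef n))) (range ef)"
proof -
  have inj_src: "inj (\<lambda>n. src (ef n))"
    by (rule injI, rule ccontr)
      (metis acyclic_ray_vertices_distinct[OF assms] linorder_neqE_nat)
  moreover have "inj ef"
    by (rule injI) (metis injD[OF inj_src])
  moreover have "range (\<lambda>n. src (ef n)) \<subseteq> V" "range ef \<subseteq> E"
    using assms(1) ray unfolding graph_def is_ray_def by auto
  ultimately show ?thesis
    using ray unfolding unary_tree_subgraph_def is_ray_def by blast
qed

lemma idempotent_gis_carrier_cases:
  "x \<in> idempotents (gis_carrier V E src rng) \<Longrightarrow>
     x = Zero \<or> (\<exists>p. x = PQ p p \<and> is_path V E src rng p)"
  unfolding idempotents_def gis_carrier_def
  by (auto split: if_splits simp: prefix_def)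

lemma gis_le_PQ_diag:
  "gis_le (PQ p p) (PQ q q) \<Longrightarrow> fst p = fst q \<and> prefix (snd q) (snd p)"
  unfolding gis_le_def by (auto split: if_splits)

lemma chain_PQ_diag_comparable:
  assumes "is_chain C" and "PQ p p \<in> C" and "PQ q q \<in> C"
  shows "fst p = fst q \<and> (prefix (snd p) (snd q) \<or> prefix (snd q) (snd p))"
proof -
  have "gis_le (PQ p p) (PQ q q) \<or> gis_le (PQ q q) (PQ p p)"
    using assms unfolding is_chain_def by blast
  then show ?thesis
    by (auto dest: gis_le_PQ_diag)
qed

lemma PQ_path_gis_gen:
  "is_path T0 T1 src rng (v, es) \<Longrightarrow>
     PQ (v, es) (path_rng rng (v, es), []) \<in> gis_gen T0 T1 src rng \<and>
     PQ (path_rng rng (v, es), []) (v, es) \<in> gis_gen T0 T1 src rng"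
proof (induction es rule: rev_induct)
  case Nil
  then have "gis_vertex v \<in> gis_gen T0 T1 src rng"
    by (simp add: is_path_def gis_gen.vert)
  then show ?case
    by (simp add: gis_vertex_def path_rng_def)
next
  case (snoc e es)
  from is_path_snoc[OF snoc.prems] have prefix: "is_path T0 T1 src rng (v, es)"
    and "e \<in> T1" and src_e: "src e = path_rng rng (v, es)"
    by blast+
  then have edge: "gis_edge src rng e \<in> gis_gen T0 T1 src rng"
    and edge_inv: "gis_edge_inv src rng e \<in> gis_gen T0 T1 src rng"
    by (simp_all add: gis_gen.edge gis_gen.einv)
  from snoc.IH[OF prefix]
  have IH: "PQ (v, es) (path_rng rng (v, es), []) \<in> gis_gen T0 T1 src rng"
    "PQ (path_rng rng (v, es), []) (v, es) \<in> gis_gen T0 T1 src rng"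
    by blast+
  have "gis_mult (PQ (v, es) (path_rng rng (v, es), [])) (gis_edge src rng e)
      = PQ (v, es @ [e]) (path_rng rng (v, es @ [e]), [])"
    "gis_mult (gis_edge_inv src rng e) (PQ (path_rng rng (v, es), []) (v, es))
      = PQ (path_rng rng (v, es @ [e]), []) (v, es @ [e])"
    using src_e by (simp_all add: gis_edge_def gis_edge_inv_def path_rng_def)
  then show ?case
    using gis_gen.mult[OF IH(1) edge] gis_gen.mult[OF edge_inv IH(2)] by simp
qed

lemma PQ_path_idempotent_gis_gen:
  assumes "is_path T0 T1 src rng p"
  shows "PQ p p \<in> idempotents (gis_gen T0 T1 src rng)"
proof -
  have "PQ p (path_rng rng p, []) \<in> gis_gen T0 T1 src rng"
    and "PQ (path_rng rng p, []) p \<in> gis_gen T0 T1 src rng"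
    using PQ_path_gis_gen[of T0 T1 src rng "fst p" "snd p"] assms by simp_all
  from gis_gen.mult[OF this] have "PQ p p \<in> gis_gen T0 T1 src rng"
    by simp
  then show ?thesis
    by (simp add: idempotents_def)
qed

lemma infinite_idempotent_chain_along_ray:
  assumes "C \<subseteq> idempotents (gis_carrier V E src rng)" and "is_chain C" and "infinite C"
  obtains ef where "is_ray E src rng ef"
    and "\<And>p. PQ p p \<in> C \<Longrightarrow> p = (src (ef 0), map ef [0..<length (snd p)])"
proof -
  define P where "P = {p. PQ p p \<in> C}"
  have C_sub: "C \<subseteq> insert Zero ((\<lambda>p. PQ p p) ` P)"
    using assms(1) idempotent_gis_carrier_cases unfolding P_def by blast
  have P_path: "is_path V E src rng p" if "p \<in> P" for p
    using that assms(1) idempotent_gis_carrier_cases unfolding P_def by blast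
  have comparable: "fst p = fst q \<and> (prefix (snd p) (snd q) \<or> prefix (snd q) (snd p))"
    if "p \<in> P" "q \<in> P" for p q
    using chain_PQ_diag_comparable[OF assms(2)] that unfolding P_def by blast
  have "infinite P"
    using assms(3) C_sub finite_subset by blast
  obtain v where v: "\<And>p. p \<in> P \<Longrightarrow> fst p = v"
    using comparable by metis
  have "inj_on snd P"
    using v by (simp add: inj_on_def prod_eq_iff)
  then have unbounded: "\<exists>es\<in>snd ` P. n < length es" for n
    using \<open>infinite P\<close> comparable
    by (intro prefix_chain_lengths_unbounded) (auto dest: finite_imageD)
  then obtain ef where ef: "\<And>es. es \<in> snd ` P \<Longrightarrow> es = map ef [0..<length es]"
    using comparable prefix_chain_limit[of "snd ` P"] by blast
  have P_eq: "p = (v, map ef [0..<length (snd p)])" if "p \<in> P" for p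
    using ef[of "snd p"] v[OF that] that by (metis imageI prod.collapse)
  have "\<exists>m>n. is_path V E src rng (v, map ef [0..<m])" for n
    using unbounded[of n] P_eq P_path by fastforce
  then have "is_ray E src rng ef" and "src (ef 0) = v"
    by (fact is_ray_if_paths_unbounded)+
  then show ?thesis
    using that P_eq unfolding P_def by blast
qed

theorem lemma4p4:
  fixes V :: "'v set" and Ed :: "'e set" and src rng :: "'e \<Rightarrow> 'v"
    and C :: "('v,'e) gis set"
  assumes "graph V Ed src rng"
    and "acyclic_graph V Ed src rng"
    and "C \<subseteq> idempotents (gis_carrier V Ed src rng)"
    and "is_chain C"
    and "infinite C"
  shows "\<exists>T0 T1. unary_tree_subgraph V Ed src rng T0 T1 \<and>
                 C \<subseteq> idempotents (gis_gen T0 T1 src rng)"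
proof -
  obtain ef where ray: "is_ray Ed src rng ef"
    and along: "\<And>p. PQ p p \<in> C \<Longrightarrow> p = (src (ef 0), map ef [0..<length (snd p)])"
    using infinite_idempotent_chain_along_ray[OF assms(3-5)] by blast
  define T0 where "T0 = range (\<lambda>n. src (ef n))"
  define T1 where "T1 = range ef"
  have "C \<subseteq> idempotents (gis_gen T0 T1 src rng)"
  proof
    fix x assume "x \<in> C"
    then consider "x = Zero" | p where "x = PQ p p" "PQ p p \<in> C"
      using assms(3) idempotent_gis_carrier_cases by blast
    then show "x \<in> idempotents (gis_gen T0 T1 src rng)"
    proof cases
      case 1
      then show ?thesis by (simp add: idempotents_def gis_gen.zero)
    next
      case 2
      have "is_path T0 T1 src rng (src (ef 0), map ef [0..<length (snd p)])"
        using ray unfolding T0_def T1_def is_ray_def by (intro is_path_map_upt) auto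
      then show ?thesis
        using 2 along PQ_path_idempotent_gis_gen by metis
    qed
  qed
  then show ?thesis
    using unary_tree_subgraph_ray[OF assms(1,2) ray] unfolding T0_def T1_def by blast
qed

end
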